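(* The categorical algebra $\Delta_\Bbbk$ is a free right $\Omega$-module, where $\Omega\subseteq\Delta_\Bbbk$ is the unital subalgebra generated by the elements $1_n$ and $d_{0,n}$, $n\in\mathbb{N}$.
   Context: $\Bbbk$ is a field. $\Delta$ is the skeletal category of finite well-ordered sets $[n]=\{0<\cdots<n\}$ with order-preserving maps, with generating coface maps $\partial^n_i\colon[n]\to[n+1]$ and codegeneracy maps $\sigma^n_i\colon[n+1]\to[n]$. The categorical algebra $\Delta_\Bbbk$ (also written $\Delta$) is the $\Bbbk$-algebra with basis the morphisms of $\Delta$, multiplication given by composition when composable and $0$ otherwise; $1_n$ is the identity of $[n]$. For $0\le i\le n$, $d_{i,n}=\sum_{j=i}^n(-1)^j\partial^n_j$; in particular $d_{0,n}=\sum_{i=0}^n(-1)^i\partial^n_i$. Right $\Omega$-modules are chain complexes of $\Bbbk$-vector spaces. *)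

theory Defs
  imports Main
begin

text \<open>A morphism [m] -> [n] of the simplex category is encoded as a triple (m, n, f)
  with f monotone on {0..m}, f maps {0..m} into {0..n}, and f i = 0 for i > m
  (so the encoding is unique).\<close>

type_synonym mor = "nat \<times> nat \<times> (nat \<Rightarrow> nat)"

definition src :: "mor \<Rightarrow> nat" where "src \<phi> = fst \<phi>"
definition tgt :: "mor \<Rightarrow> nat" where "tgt \<phi> = fst (snd \<phi>)"
definition fn :: "mor \<Rightarrow> nat \<Rightarrow> nat" where "fn \<phi> = snd (snd \<phi>)"

definition valid_mor :: "mor \<Rightarrow> bool" where
  "valid_mor \<phi> \<longleftrightarrow>
     (\<forall>i\<le>src \<phi>. fn \<phi> i \<le> tgt \<phi>) \<and>
     (\<forall>i j. i \<le> j \<longrightarrow> j \<le> src \<phi> \<longrightarrow> fn \<phi> i \<le> fn \<phi> j) \<and>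
     (\<forall>i. src \<phi> < i \<longrightarrow> fn \<phi> i = 0)"

definition mcomp :: "mor \<Rightarrow> mor \<Rightarrow> mor" where
  "mcomp \<phi> \<chi> = (src \<chi>, tgt \<phi>, \<lambda>i. if i \<le> src \<chi> then fn \<phi> (fn \<chi> i) else 0)"

text \<open>Elements of the categorical algebra: finitely supported k-linear combinations of morphisms.\<close>
definition supp :: "(mor \<Rightarrow> 'k::field) \<Rightarrow> mor set" where
  "supp x = {\<phi>. x \<phi> \<noteq> 0}"

definition delta_alg :: "(mor \<Rightarrow> 'k::field) set" where
  "delta_alg = {x. finite (supp x) \<and> (\<forall>\<phi>. x \<phi> \<noteq> 0 \<longrightarrow> valid_mor \<phi>)}"

definition dmult :: "(mor \<Rightarrow> 'k::field) \<Rightarrow> (mor \<Rightarrow> 'k) \<Rightarrow> (mor \<Rightarrow> 'k)" where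
  "dmult x y = (\<lambda>\<psi>. \<Sum>\<phi>\<in>supp x. \<Sum>\<chi>\<in>supp y.
      if tgt \<chi> = src \<phi> \<and> mcomp \<phi> \<chi> = \<psi> then x \<phi> * y \<chi> else 0)"

definition bas :: "mor \<Rightarrow> (mor \<Rightarrow> 'k::field)" where
  "bas \<phi> = (\<lambda>\<psi>. if \<psi> = \<phi> then 1 else 0)"

definition ident :: "nat \<Rightarrow> (mor \<Rightarrow> 'k::field)" where
  "ident n = bas (n, n, \<lambda>i. if i \<le> n then i else 0)"

definition coface_mor :: "nat \<Rightarrow> nat \<Rightarrow> mor" where
  "coface_mor n i = (n, Suc n, \<lambda>j. if j \<le> n then (if j < i then j else Suc j) else 0)"

definition d0 :: "nat \<Rightarrow> (mor \<Rightarrow> 'k::field)" where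
  "d0 n = (\<lambda>\<psi>. \<Sum>i\<le>n. (-1) ^ i * bas (coface_mor n i) \<psi>)"

inductive_set Omega :: "(mor \<Rightarrow> 'k::field) set" where
  gen_id: "ident n \<in> Omega"
| gen_d: "d0 n \<in> Omega"
| zero: "(\<lambda>_. 0) \<in> Omega"
| add: "x \<in> Omega \<Longrightarrow> y \<in> Omega \<Longrightarrow> (\<lambda>\<psi>. x \<psi> + y \<psi>) \<in> Omega"
| smult: "x \<in> Omega \<Longrightarrow> (\<lambda>\<psi>. c * x \<psi>) \<in> Omega"
| mult: "x \<in> Omega \<Longrightarrow> y \<in> Omega \<Longrightarrow> dmult x y \<in> Omega"

text \<open>A subset M of the categorical algebra, with right Omega-action given by multiplication,
  is a free right Omega-module: it is a direct sum of copies of the modules 1_n Omega,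
  i.e. there is a set B of generators, each b labelled by an object n_b with b 1_{n_b} = b,
  such that every element of M is uniquely a finite sum sum_b b w_b with w_b in 1_{n_b} Omega.\<close>
definition free_right_Omega_module :: "(mor \<Rightarrow> 'k::field) set \<Rightarrow> bool" where
  "free_right_Omega_module M \<longleftrightarrow>
    (\<forall>x\<in>M. \<forall>w\<in>Omega. dmult x w \<in> M) \<and>
    (\<exists>B lab. B \<subseteq> M \<and> (\<forall>b\<in>B. dmult b (ident (lab b)) = b) \<and>
      (\<forall>x\<in>M. \<exists>!w :: (mor \<Rightarrow> 'k) \<Rightarrow> (mor \<Rightarrow> 'k).
         (\<forall>b. b \<notin> B \<longrightarrow> w b = (\<lambda>_. 0)) \<and>
         finite {b\<in>B. w b \<noteq> (\<lambda>_. 0)} \<and>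
         (\<forall>b\<in>B. w b \<in> Omega \<and> dmult (ident (lab b)) (w b) = w b) \<and>
         x = (\<lambda>\<psi>. \<Sum>b\<in>{b\<in>B. w b \<noteq> (\<lambda>_. 0)}. dmult b (w b) \<psi>)))"

end

theory Submission
  imports Defs
begin

text \<open>Omega is spanned by the elements 1_n and d_{0,n}, because these are closed under
  products (d_{0,n+1} d_{0,n} = 0); hence 1_{m+1} Omega is spanned by 1_{m+1} and d_{0,m}.
  The free generators of Delta are the morphisms \<phi> : [m+1] \<rightarrow> [n] with an odd number of
  leading zeros. On morphisms with an even number of leading zeros, \<phi> d_{0,m} =
  \<Sum>_i (-1)^i \<phi> \<partial>_i is exactly the basis vector \<phi> \<partial>_0: the faces
  \<phi> \<partial>_i with i below the leading zeros all equal \<phi> \<partial>_0 and their signs add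
  up to 1, while the other faces keep the odd number of leading zeros. Since
  \<phi> \<mapsto> \<phi> \<partial>_0 is a bijection from odd to even morphisms (its inverse prepends a
  zero), the family of all \<phi> and \<phi> d_{0,m} is unitriangular with respect to the
  standard basis of Delta, hence a basis.\<close>

section \<open>Morphisms of the simplex category\<close>

lemma src_triple [simp]: "src (a, b, f) = a" by (simp add: src_def)
lemma tgt_triple [simp]: "tgt (a, b, f) = b" by (simp add: tgt_def)
lemma fn_triple [simp]: "fn (a, b, f) = f" by (simp add: fn_def)

lemma mor_eqI: "src \<phi> = src \<psi> \<Longrightarrow> tgt \<phi> = tgt \<psi> \<Longrightarrow> (\<And>i. fn \<phi> i = fn \<psi> i) \<Longrightarrow> \<phi> = \<psi>"
  by (metis src_def tgt_def fn_def prod_eqI ext)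

definition id_mor :: "nat \<Rightarrow> mor" where "id_mor n = (n, n, \<lambda>i. if i \<le> n then i else 0)"

lemma ident_eq_bas: "ident n = bas (id_mor n)" by (simp add: ident_def id_mor_def)

lemma src_mcomp [simp]: "src (mcomp \<phi> \<chi>) = src \<chi>" by (simp add: mcomp_def)
lemma tgt_mcomp [simp]: "tgt (mcomp \<phi> \<chi>) = tgt \<phi>" by (simp add: mcomp_def)
lemma fn_mcomp: "fn (mcomp \<phi> \<chi>) = (\<lambda>i. if i \<le> src \<chi> then fn \<phi> (fn \<chi> i) else 0)"
  by (simp add: mcomp_def)
lemma src_coface_mor [simp]: "src (coface_mor n i) = n" by (simp add: coface_mor_def)
lemma tgt_coface_mor [simp]: "tgt (coface_mor n i) = Suc n" by (simp add: coface_mor_def)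
lemma fn_coface_mor: "fn (coface_mor n i) = (\<lambda>j. if j \<le> n then (if j < i then j else Suc j) else 0)"
  by (simp add: coface_mor_def)
lemma src_id_mor [simp]: "src (id_mor n) = n" by (simp add: id_mor_def)
lemma tgt_id_mor [simp]: "tgt (id_mor n) = n" by (simp add: id_mor_def)
lemma fn_id_mor: "fn (id_mor n) = (\<lambda>i. if i \<le> n then i else 0)" by (simp add: id_mor_def)

lemma valid_mor_mcomp:
  assumes "valid_mor \<phi>" "valid_mor \<chi>" "tgt \<chi> = src \<phi>"
  shows "valid_mor (mcomp \<phi> \<chi>)"
  using assms unfolding valid_mor_def fn_mcomp by (auto simp: le_trans)

lemma valid_coface_mor: "i \<le> Suc n \<Longrightarrow> valid_mor (coface_mor n i)"
  unfolding valid_mor_def fn_coface_mor by auto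

lemma valid_id_mor: "valid_mor (id_mor n)"
  unfolding valid_mor_def fn_id_mor by auto

lemma mcomp_id_mor_right: "valid_mor \<phi> \<Longrightarrow> mcomp \<phi> (id_mor (src \<phi>)) = \<phi>"
  by (rule mor_eqI) (auto simp: fn_mcomp fn_id_mor valid_mor_def)

lemma mcomp_id_mor_left: "valid_mor \<chi> \<Longrightarrow> mcomp (id_mor (tgt \<chi>)) \<chi> = \<chi>"
  by (rule mor_eqI) (auto simp: fn_mcomp fn_id_mor valid_mor_def)

lemma inj_on_coface_mor: "inj_on (coface_mor n) {..Suc n}"
proof (rule inj_onI)
  fix i j assume ij: "i \<in> {..Suc n}" "j \<in> {..Suc n}" and eq: "coface_mor n i = coface_mor n j"
  show "i = j"
  proof (rule ccontr)
    assume "i \<noteq> j"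
    then have "min i j \<le> n" "min i j < max i j" using ij by auto
    moreover have "fn (coface_mor n i) (min i j) = fn (coface_mor n j) (min i j)" using eq by simp
    ultimately show False by (auto simp: fn_coface_mor min_def max_def split: if_splits)
  qed
qed

lemma id_mor_neq_coface_mor [simp]: "id_mor k \<noteq> coface_mor m i" "coface_mor m i \<noteq> id_mor k"
  by (auto simp: id_mor_def coface_mor_def)

lemma mcomp_coface_mor_coface_mor:
  "i \<le> j \<Longrightarrow> j \<le> m \<Longrightarrow>
    mcomp (coface_mor (Suc m) (Suc j)) (coface_mor m i) = mcomp (coface_mor (Suc m) i) (coface_mor m j)"
  by (rule mor_eqI) (auto simp: fn_mcomp fn_coface_mor)

section \<open>The categorical algebra\<close>

lemma bas_apply: "bas \<phi> \<psi> = (if \<psi> = \<phi> then 1 else 0)"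
  by (simp add: bas_def)

lemma supp_bas [simp]: "supp (bas \<phi> :: mor \<Rightarrow> 'k::field) = {\<phi>}"
  by (auto simp: supp_def bas_def)

lemma dmult_eq_sum:
  fixes x y :: "mor \<Rightarrow> 'k::field"
  assumes "finite F" "supp x \<subseteq> F" "finite G" "supp y \<subseteq> G"
  shows "dmult x y \<psi> = (\<Sum>\<phi>\<in>F. \<Sum>\<chi>\<in>G. if tgt \<chi> = src \<phi> \<and> mcomp \<phi> \<chi> = \<psi> then x \<phi> * y \<chi> else 0)"
proof -
  have "dmult x y \<psi> = (\<Sum>\<phi>\<in>supp x. \<Sum>\<chi>\<in>G. if tgt \<chi> = src \<phi> \<and> mcomp \<phi> \<chi> = \<psi> then x \<phi> * y \<chi> else 0)"
    unfolding dmult_def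
    by (rule sum.cong[OF refl], rule sum.mono_neutral_left) (use assms in \<open>auto simp: supp_def\<close>)
  also have "\<dots> = (\<Sum>\<phi>\<in>F. \<Sum>\<chi>\<in>G. if tgt \<chi> = src \<phi> \<and> mcomp \<phi> \<chi> = \<psi> then x \<phi> * y \<chi> else 0)"
    by (rule sum.mono_neutral_left) (use assms in \<open>auto simp: supp_def intro: sum.neutral\<close>)
  finally show ?thesis .
qed

lemma dmult_linear_right:
  fixes x y z :: "mor \<Rightarrow> 'k::field"
  assumes "finite (supp x)" "finite (supp y)" "finite (supp z)"
  shows "dmult x (\<lambda>\<psi>. a * y \<psi> + c * z \<psi>) = (\<lambda>\<psi>. a * dmult x y \<psi> + c * dmult x z \<psi>)"
proof
  fix \<psi>
  have "supp (\<lambda>\<psi>. a * y \<psi> + c * z \<psi>) \<subseteq> supp y \<union> supp z" by (auto simp: supp_def)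
  then show "dmult x (\<lambda>\<psi>. a * y \<psi> + c * z \<psi>) \<psi> = a * dmult x y \<psi> + c * dmult x z \<psi>"
    using assms
    by (simp add: dmult_eq_sum[of "supp x" x "supp y \<union> supp z"] sum_distrib_left
        sum.distrib[symmetric] algebra_simps if_distrib cong: if_cong)
qed

lemma dmult_linear_left:
  fixes x y z :: "mor \<Rightarrow> 'k::field"
  assumes "finite (supp x)" "finite (supp y)" "finite (supp z)"
  shows "dmult (\<lambda>\<psi>. a * x \<psi> + y \<psi>) z = (\<lambda>\<psi>. a * dmult x z \<psi> + dmult y z \<psi>)"
proof
  fix \<psi>
  have "supp (\<lambda>\<psi>. a * x \<psi> + y \<psi>) \<subseteq> supp x \<union> supp y" by (auto simp: supp_def)
  then show "dmult (\<lambda>\<psi>. a * x \<psi> + y \<psi>) z \<psi> = a * dmult x z \<psi> + dmult y z \<psi>"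
    using assms
    by (simp add: dmult_eq_sum[of "supp x \<union> supp y" _ "supp z"] sum_distrib_left
        sum.distrib[symmetric] algebra_simps if_distrib cong: if_cong)
qed

lemma dmult_zero_left [simp]: "dmult (\<lambda>_. 0) y = (\<lambda>_. (0::'k::field))"
  by (simp add: dmult_def supp_def)

lemma dmult_zero_right [simp]: "dmult x (\<lambda>_. 0) = (\<lambda>_. (0::'k::field))"
  by (simp add: dmult_def supp_def)

lemma dmult_bas_left:
  fixes y :: "mor \<Rightarrow> 'k::field"
  assumes "finite G" "supp y \<subseteq> G"
  shows "dmult (bas \<phi>) y \<psi> = (\<Sum>\<chi>\<in>G. if tgt \<chi> = src \<phi> \<and> mcomp \<phi> \<chi> = \<psi> then y \<chi> else 0)"
  using dmult_eq_sum[of "{\<phi>}" "bas \<phi>" G y \<psi>] assms by (simp add: bas_apply cong: if_cong)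

lemma dmult_bas_right:
  fixes x :: "mor \<Rightarrow> 'k::field"
  assumes "finite F" "supp x \<subseteq> F"
  shows "dmult x (bas \<chi>) \<psi> = (\<Sum>\<phi>\<in>F. if tgt \<chi> = src \<phi> \<and> mcomp \<phi> \<chi> = \<psi> then x \<phi> else 0)"
  using dmult_eq_sum[of F x "{\<chi>}" "bas \<chi>" \<psi>] assms by (simp add: bas_apply cong: if_cong)

lemma dmult_bas_bas:
  "dmult (bas \<phi>) (bas \<chi>) = (if tgt \<chi> = src \<phi> then bas (mcomp \<phi> \<chi>) else (\<lambda>_. 0::'k::field))"
  by (rule ext) (simp add: dmult_bas_left[of "{\<chi>}" "bas \<chi>"] bas_apply)

lemma dmult_bas_ident: "valid_mor \<phi> \<Longrightarrow> dmult (bas \<phi>) (ident (src \<phi>)) = (bas \<phi> :: mor \<Rightarrow> 'k::field)"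
  by (simp add: ident_eq_bas dmult_bas_bas mcomp_id_mor_right)

lemma dmult_nonzeroE:
  fixes x y :: "mor \<Rightarrow> 'k::field"
  assumes "dmult x y \<psi> \<noteq> 0"
  obtains \<phi> \<chi> where "x \<phi> \<noteq> 0" "y \<chi> \<noteq> 0" "tgt \<chi> = src \<phi>" "mcomp \<phi> \<chi> = \<psi>"
proof -
  from assms obtain \<phi> where "\<phi> \<in> supp x"
    "(\<Sum>\<chi>\<in>supp y. if tgt \<chi> = src \<phi> \<and> mcomp \<phi> \<chi> = \<psi> then x \<phi> * y \<chi> else 0) \<noteq> 0"
    unfolding dmult_def by (rule sum.not_neutral_contains_not_neutral)
  then obtain \<chi> where "(if tgt \<chi> = src \<phi> \<and> mcomp \<phi> \<chi> = \<psi> then x \<phi> * y \<chi> else 0) \<noteq> 0"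
    by (blast intro: sum.not_neutral_contains_not_neutral)
  then show ?thesis using that by (metis mult_not_zero)
qed

lemma delta_algI:
  "finite (supp x) \<Longrightarrow> (\<And>\<phi>. x \<phi> \<noteq> 0 \<Longrightarrow> valid_mor \<phi>) \<Longrightarrow> x \<in> delta_alg"
  by (simp add: delta_alg_def)

lemma finite_supp_delta_alg: "x \<in> delta_alg \<Longrightarrow> finite (supp x)"
  by (simp add: delta_alg_def)

lemma valid_mor_delta_alg: "x \<in> delta_alg \<Longrightarrow> x \<phi> \<noteq> 0 \<Longrightarrow> valid_mor \<phi>"
  unfolding delta_alg_def by blast

lemma supp_dmult_subset:
  fixes x y :: "mor \<Rightarrow> 'k::field"
  shows "supp (dmult x y) \<subseteq> (\<lambda>(\<phi>, \<chi>). mcomp \<phi> \<chi>) ` (supp x \<times> supp y)"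
proof
  fix \<psi> assume "\<psi> \<in> supp (dmult x y)"
  then obtain \<phi> \<chi> where "x \<phi> \<noteq> 0" "y \<chi> \<noteq> 0" "mcomp \<phi> \<chi> = \<psi>"
    unfolding supp_def by (blast elim: dmult_nonzeroE)
  then show "\<psi> \<in> (\<lambda>(\<phi>, \<chi>). mcomp \<phi> \<chi>) ` (supp x \<times> supp y)"
    by (intro image_eqI[of _ _ "(\<phi>, \<chi>)"]) (simp_all add: supp_def)
qed

lemma finite_supp_dmult:
  fixes x y :: "mor \<Rightarrow> 'k::field"
  shows "finite (supp x) \<Longrightarrow> finite (supp y) \<Longrightarrow> finite (supp (dmult x y))"
  by (rule finite_subset[OF supp_dmult_subset]) simp

lemma dmult_in_delta_alg:
  fixes x y :: "mor \<Rightarrow> 'k::field"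
  assumes x: "x \<in> delta_alg" and y: "y \<in> delta_alg"
  shows "dmult x y \<in> delta_alg"
proof (rule delta_algI)
  show "finite (supp (dmult x y))"
    using x y by (intro finite_supp_dmult finite_supp_delta_alg)
  fix \<psi> assume "dmult x y \<psi> \<noteq> 0"
  then obtain \<phi> \<chi> where "x \<phi> \<noteq> 0" "y \<chi> \<noteq> 0" "tgt \<chi> = src \<phi>" "mcomp \<phi> \<chi> = \<psi>"
    by (rule dmult_nonzeroE)
  with x y show "valid_mor \<psi>" by (metis valid_mor_delta_alg valid_mor_mcomp)
qed

lemma bas_in_delta_alg: "valid_mor \<phi> \<Longrightarrow> (bas \<phi> :: mor \<Rightarrow> 'k::field) \<in> delta_alg"
  by (rule delta_algI) (simp_all add: bas_apply split: if_splits)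

lemma delta_alg_lincomb:
  fixes x y :: "mor \<Rightarrow> 'k::field"
  assumes "x \<in> delta_alg" "y \<in> delta_alg"
  shows "(\<lambda>\<psi>. a * x \<psi> + c * y \<psi>) \<in> delta_alg"
proof (rule delta_algI)
  have "supp (\<lambda>\<psi>. a * x \<psi> + c * y \<psi>) \<subseteq> supp x \<union> supp y" by (auto simp: supp_def)
  then show "finite (supp (\<lambda>\<psi>. a * x \<psi> + c * y \<psi>))"
    using assms by (meson finite_UnI finite_subset finite_supp_delta_alg)
  fix \<psi> assume "a * x \<psi> + c * y \<psi> \<noteq> 0"
  then have "x \<psi> \<noteq> 0 \<or> y \<psi> \<noteq> 0" by auto
  then show "valid_mor \<psi>" using assms valid_mor_delta_alg by blast
qed

lemma delta_alg_sum:
  fixes f :: "mor \<Rightarrow> mor \<Rightarrow> 'k::field"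
  assumes "finite F" "\<And>\<phi>. \<phi> \<in> F \<Longrightarrow> f \<phi> \<in> delta_alg"
  shows "(\<lambda>\<psi>. \<Sum>\<phi>\<in>F. c \<phi> * f \<phi> \<psi>) \<in> delta_alg"
  using assms
proof (induction F rule: finite_induct)
  case empty
  then show ?case by (intro delta_algI) (simp_all add: supp_def)
next
  case (insert \<phi> F)
  then show ?case using delta_alg_lincomb[of "f \<phi>" "\<lambda>\<psi>. \<Sum>\<phi>\<in>F. c \<phi> * f \<phi> \<psi>" "c \<phi>" 1] by simp
qed

lemma ident_apply: "ident n \<psi> = (if \<psi> = id_mor n then 1 else (0::'k::field))"
  by (simp add: ident_eq_bas bas_apply)

lemma ident_coface_mor [simp]: "ident n (coface_mor m i) = (0::'k::field)"
  by (simp add: ident_apply)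

lemma finite_supp_ident: "finite (supp (ident n :: mor \<Rightarrow> 'k::field))"
  by (simp add: ident_eq_bas)

lemma d0_apply: "d0 n \<psi> = (\<Sum>i\<le>n. if \<psi> = coface_mor n i then (-1)^i else (0::'k::field))"
  unfolding d0_def bas_def by (intro sum.cong) auto

lemma d0_coface_mor:
  assumes "i \<le> m"
  shows "d0 n (coface_mor m i) = (if m = n then (-1)^i else (0::'k::field))"
proof (cases "m = n")
  case True
  have "\<And>j. j \<le> n \<Longrightarrow> coface_mor m i = coface_mor n j \<longleftrightarrow> j = i"
    using True assms inj_onD[OF inj_on_coface_mor, of n i] by auto
  then have "d0 n (coface_mor m i) = (\<Sum>j\<le>n. if j = i then (-1)^j else (0::'k))"
    unfolding d0_apply by (intro sum.cong refl) auto
  then show ?thesis using True assms by simp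
next
  case False
  then have "\<And>j. coface_mor m i \<noteq> coface_mor n j" by (metis src_coface_mor)
  then show ?thesis using False unfolding d0_apply by simp
qed

lemma d0_eq_0: "\<psi> \<notin> coface_mor n ` {..n} \<Longrightarrow> d0 n \<psi> = (0::'k::field)"
  unfolding d0_apply by (intro sum.neutral) auto

lemma d0_id_mor [simp]: "d0 m (id_mor k) = (0::'k::field)"
  by (rule d0_eq_0) auto

lemma supp_d0: "supp (d0 n :: mor \<Rightarrow> 'k::field) \<subseteq> coface_mor n ` {..n}"
  using d0_eq_0 unfolding supp_def by blast

lemma finite_supp_d0: "finite (supp (d0 n :: mor \<Rightarrow> 'k::field))"
  using supp_d0 finite_subset by blast

lemma inj_on_coface_mor_le: "inj_on (coface_mor n) {..n}"
  by (rule inj_on_subset[OF inj_on_coface_mor]) auto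

lemma dmult_bas_d0:
  "dmult (bas \<phi>) (d0 m) \<psi> =
    (\<Sum>i\<le>m. if Suc m = src \<phi> \<and> mcomp \<phi> (coface_mor m i) = \<psi> then (-1)^i else (0::'k::field))"
proof -
  have "dmult (bas \<phi>) (d0 m) \<psi> = (\<Sum>\<chi>\<in>coface_mor m ` {..m}.
      if tgt \<chi> = src \<phi> \<and> mcomp \<phi> \<chi> = \<psi> then d0 m \<chi> else (0::'k))"
    by (rule dmult_bas_left) (auto simp: supp_d0)
  then show ?thesis
    by (simp add: sum.reindex[OF inj_on_coface_mor_le] d0_coface_mor cong: if_cong)
qed

lemma dmult_d0_bas:
  "dmult (d0 n) (bas \<chi>) \<psi> =
    (\<Sum>i\<le>n. if tgt \<chi> = n \<and> mcomp (coface_mor n i) \<chi> = \<psi> then (-1)^i else (0::'k::field))"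
proof -
  have "dmult (d0 n) (bas \<chi>) \<psi> = (\<Sum>\<phi>\<in>coface_mor n ` {..n}.
      if tgt \<chi> = src \<phi> \<and> mcomp \<phi> \<chi> = \<psi> then d0 n \<phi> else (0::'k))"
    by (rule dmult_bas_right) (auto simp: supp_d0)
  then show ?thesis
    by (simp add: sum.reindex[OF inj_on_coface_mor_le] d0_coface_mor cong: if_cong)
qed

lemma dmult_d0_d0_eq_sum:
  "dmult (d0 n) (d0 m) \<psi> = (\<Sum>i\<le>n. \<Sum>j\<le>m.
    if Suc m = n \<and> mcomp (coface_mor n i) (coface_mor m j) = \<psi> then (-1)^i * (-1)^j else (0::'k::field))"
proof -
  have "dmult (d0 n) (d0 m) \<psi> = (\<Sum>\<phi>\<in>coface_mor n ` {..n}. \<Sum>\<chi>\<in>coface_mor m ` {..m}.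
      if tgt \<chi> = src \<phi> \<and> mcomp \<phi> \<chi> = \<psi> then d0 n \<phi> * d0 m \<chi> else (0::'k))"
    by (rule dmult_eq_sum) (auto simp: supp_d0)
  then show ?thesis
    by (simp add: sum.reindex[OF inj_on_coface_mor_le] d0_coface_mor cong: if_cong)
qed

lemma dmult_ident_ident: "dmult (ident n) (ident m) = (if n = m then ident n else (\<lambda>_. 0::'k::field))"
  by (simp add: ident_eq_bas dmult_bas_bas mcomp_id_mor_left[OF valid_id_mor, of m, simplified])

lemma dmult_ident_d0: "dmult (ident n) (d0 m) = (if n = Suc m then d0 m else (\<lambda>_. 0::'k::field))"
proof
  fix \<psi>
  have "\<And>i. i \<le> m \<Longrightarrow> mcomp (id_mor (Suc m)) (coface_mor m i) = coface_mor m i"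
    using mcomp_id_mor_left[OF valid_coface_mor] by (metis le_SucI tgt_coface_mor)
  then show "dmult (ident n) (d0 m) \<psi> = (if n = Suc m then d0 m else (\<lambda>_. 0::'k)) \<psi>"
    unfolding ident_eq_bas dmult_bas_d0 d0_apply by (auto intro!: sum.cong)
qed

lemma dmult_d0_ident: "dmult (d0 n) (ident m) = (if m = n then d0 n else (\<lambda>_. 0::'k::field))"
proof
  fix \<psi>
  have "\<And>i. i \<le> n \<Longrightarrow> mcomp (coface_mor n i) (id_mor n) = coface_mor n i"
    using mcomp_id_mor_right[OF valid_coface_mor] by (metis le_SucI src_coface_mor)
  then show "dmult (d0 n) (ident m) \<psi> = (if m = n then d0 n else (\<lambda>_. 0::'k)) \<psi>"
    unfolding ident_eq_bas dmult_d0_bas d0_apply by (auto intro!: sum.cong)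
qed

text \<open>The cosimplicial identity pairs the term (i, j) with i \<le> j against (j + 1, i), with opposite signs.\<close>
lemma dmult_d0_d0: "dmult (d0 n) (d0 m) = (\<lambda>_. 0::'k::field)"
proof
  fix \<psi>
  show "dmult (d0 n) (d0 m) \<psi> = (0::'k)"
  proof (cases "n = Suc m")
    case False
    then show ?thesis by (simp add: dmult_d0_d0_eq_sum)
  next
    case True
    define T where "T = (\<lambda>(i, j). if mcomp (coface_mor (Suc m) i) (coface_mor m j) = \<psi>
      then (-1)^i * (-1)^j else (0::'k))"
    define A where "A = {(i, j). i \<le> j \<and> j \<le> m}"
    define B where "B = {(i::nat, j::nat). j < i \<and> i \<le> Suc m}"
    define swap where "swap = (\<lambda>(i::nat, j::nat). (Suc j, i))"
    have "finite A" by (rule finite_subset[of _ "{..m} \<times> {..m}"]) (auto simp: A_def)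
    have "finite B" by (rule finite_subset[of _ "{..Suc m} \<times> {..m}"]) (auto simp: B_def)
    have "inj_on swap A" by (auto simp: inj_on_def swap_def)
    moreover have "swap ` A = B"
    proof (rule set_eqI, rule iffI)
      fix p assume "p \<in> B"
      then obtain i j where "p = (i, j)" "j < i" "i \<le> Suc m" by (auto simp: B_def)
      then show "p \<in> swap ` A"
        by (intro image_eqI[of _ _ "(j, i - 1)"]) (auto simp: A_def swap_def)
    qed (auto simp: A_def B_def swap_def)
    ultimately have "sum T B = sum (T \<circ> swap) A" by (metis sum.reindex)
    also have "\<dots> = - sum T A"
      by (simp add: sum_negf[symmetric], intro sum.cong refl)
        (auto simp: A_def T_def swap_def mcomp_coface_mor_coface_mor)
    finally have cancel: "sum T A + sum T B = 0" by simp
    have "dmult (d0 n) (d0 m) \<psi> = sum T ({..Suc m} \<times> {..m})"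
      using True by (simp add: dmult_d0_d0_eq_sum T_def sum.cartesian_product)
    also have "{..Suc m} \<times> {..m} = A \<union> B" by (auto simp: A_def B_def)
    also have "sum T (A \<union> B) = sum T A + sum T B"
      by (rule sum.union_disjoint)
        (use \<open>finite A\<close> \<open>finite B\<close> in \<open>auto simp: A_def B_def\<close>)
    finally show ?thesis using cancel by simp
  qed
qed

section \<open>The subalgebra Omega\<close>

inductive_set span_ident_d0 :: "(mor \<Rightarrow> 'k::field) set" where
  zero: "(\<lambda>_. 0) \<in> span_ident_d0"
| ident: "q \<in> span_ident_d0 \<Longrightarrow> (\<lambda>\<psi>. c * ident n \<psi> + q \<psi>) \<in> span_ident_d0"
| d0: "q \<in> span_ident_d0 \<Longrightarrow> (\<lambda>\<psi>. c * d0 n \<psi> + q \<psi>) \<in> span_ident_d0"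

definition omega_shaped :: "(mor \<Rightarrow> 'k::field) \<Rightarrow> bool" where
  "omega_shaped w \<longleftrightarrow> finite (supp w) \<and>
    (\<forall>\<psi>. w \<psi> \<noteq> 0 \<longrightarrow> (\<exists>n. \<psi> = id_mor n) \<or> (\<exists>n i. i \<le> n \<and> \<psi> = coface_mor n i)) \<and>
    (\<forall>n i. i \<le> n \<longrightarrow> w (coface_mor n i) = (-1)^i * w (coface_mor n 0))"

lemma omega_shaped_zero: "omega_shaped (\<lambda>_. 0)"
  by (simp add: omega_shaped_def supp_def)

lemma omega_shaped_add:
  fixes x y :: "mor \<Rightarrow> 'k::field"
  assumes x: "omega_shaped x" and y: "omega_shaped y"
  shows "omega_shaped (\<lambda>\<psi>. c * x \<psi> + y \<psi>)"
  unfolding omega_shaped_def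
proof (intro conjI allI impI)
  have "supp (\<lambda>\<psi>. c * x \<psi> + y \<psi>) \<subseteq> supp x \<union> supp y" by (auto simp: supp_def)
  then show "finite (supp (\<lambda>\<psi>. c * x \<psi> + y \<psi>))"
    using x y unfolding omega_shaped_def by (blast intro: finite_subset)
next
  fix \<psi> assume "c * x \<psi> + y \<psi> \<noteq> 0"
  then have "x \<psi> \<noteq> 0 \<or> y \<psi> \<noteq> 0" by auto
  then show "(\<exists>n. \<psi> = id_mor n) \<or> (\<exists>n i. i \<le> n \<and> \<psi> = coface_mor n i)"
    using x y unfolding omega_shaped_def by blast
next
  fix n i :: nat assume "i \<le> n"
  then have "x (coface_mor n i) = (-1)^i * x (coface_mor n 0)"
    "y (coface_mor n i) = (-1)^i * y (coface_mor n 0)"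
    using x y unfolding omega_shaped_def by blast+
  then show "c * x (coface_mor n i) + y (coface_mor n i) =
      (-1)^i * (c * x (coface_mor n 0) + y (coface_mor n 0))"
    by (simp add: algebra_simps)
qed

lemma omega_shaped_ident: "omega_shaped (ident n :: mor \<Rightarrow> 'k::field)"
  by (auto simp: omega_shaped_def finite_supp_ident ident_apply)

lemma omega_shaped_d0: "omega_shaped (d0 n :: mor \<Rightarrow> 'k::field)"
proof -
  have "\<exists>i. i \<le> n \<and> \<psi> = coface_mor n i" if "d0 n \<psi> \<noteq> (0::'k)" for \<psi>
    using d0_eq_0[of \<psi> n] that by auto
  then show ?thesis
    unfolding omega_shaped_def by (simp add: finite_supp_d0 d0_coface_mor) blast
qed

lemma span_ident_d0_omega_shaped: "q \<in> span_ident_d0 \<Longrightarrow> omega_shaped q"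
  by (induction rule: span_ident_d0.induct)
    (auto intro: omega_shaped_zero omega_shaped_add omega_shaped_ident omega_shaped_d0)

lemma finite_supp_span_ident_d0: "q \<in> span_ident_d0 \<Longrightarrow> finite (supp q)"
  using span_ident_d0_omega_shaped omega_shaped_def by blast

lemma span_ident_d0_add:
  "x \<in> span_ident_d0 \<Longrightarrow> y \<in> span_ident_d0 \<Longrightarrow> (\<lambda>\<psi>. a * x \<psi> + y \<psi>) \<in> span_ident_d0"
proof (induction rule: span_ident_d0.induct)
  case (ident q c n)
  then have "(\<lambda>\<psi>. (a * c) * ident n \<psi> + (a * q \<psi> + y \<psi>)) \<in> span_ident_d0"
    by (intro span_ident_d0.ident) simp
  then show ?case by (simp add: algebra_simps)
next
  case (d0 q c n)
  then have "(\<lambda>\<psi>. (a * c) * d0 n \<psi> + (a * q \<psi> + y \<psi>)) \<in> span_ident_d0"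
    by (intro span_ident_d0.d0) simp
  then show ?case by (simp add: algebra_simps)
qed simp

lemma span_ident_d0_smult: "x \<in> span_ident_d0 \<Longrightarrow> (\<lambda>\<psi>. a * x \<psi>) \<in> span_ident_d0"
  using span_ident_d0_add[OF _ span_ident_d0.zero] by simp

lemma span_ident_d0_dmult_left:
  assumes g: "g = ident n \<or> g = d0 n" and y: "y \<in> span_ident_d0"
  shows "dmult g y \<in> span_ident_d0"
proof -
  have fin: "finite (supp g)" using g finite_supp_ident finite_supp_d0 by metis
  from y show ?thesis
  proof (induction rule: span_ident_d0.induct)
    case (ident q c m)
    have "dmult g (\<lambda>\<psi>. c * ident m \<psi> + q \<psi>) = (\<lambda>\<psi>. c * dmult g (ident m) \<psi> + dmult g q \<psi>)"
      using dmult_linear_right[OF fin finite_supp_ident[of m] finite_supp_span_ident_d0[OF ident.hyps],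
          of c 1]
      by simp
    then show ?case
      using g ident.IH by (auto simp: dmult_ident_ident dmult_d0_ident intro: span_ident_d0.intros)
  next
    case (d0 q c m)
    have "dmult g (\<lambda>\<psi>. c * d0 m \<psi> + q \<psi>) = (\<lambda>\<psi>. c * dmult g (d0 m) \<psi> + dmult g q \<psi>)"
      using dmult_linear_right[OF fin finite_supp_d0[of m] finite_supp_span_ident_d0[OF d0.hyps], of c 1]
      by simp
    then show ?case
      using g d0.IH by (auto simp: dmult_ident_d0 dmult_d0_d0 intro: span_ident_d0.intros)
  qed (simp add: span_ident_d0.zero)
qed

lemma span_ident_d0_dmult:
  "x \<in> span_ident_d0 \<Longrightarrow> y \<in> span_ident_d0 \<Longrightarrow> dmult x y \<in> span_ident_d0"
proof (induction rule: span_ident_d0.induct)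
  case (ident q c n)
  have "dmult (\<lambda>\<psi>. c * ident n \<psi> + q \<psi>) y = (\<lambda>\<psi>. c * dmult (ident n) y \<psi> + dmult q y \<psi>)"
    by (rule dmult_linear_left) (use ident finite_supp_span_ident_d0 finite_supp_ident in auto)
  then show ?case
    using span_ident_d0_add[OF span_ident_d0_dmult_left[of "ident n" n, OF _ ident.prems]
        ident.IH[OF ident.prems]]
    by simp
next
  case (d0 q c n)
  have "dmult (\<lambda>\<psi>. c * d0 n \<psi> + q \<psi>) y = (\<lambda>\<psi>. c * dmult (d0 n) y \<psi> + dmult q y \<psi>)"
    by (rule dmult_linear_left) (use d0 finite_supp_span_ident_d0 finite_supp_d0 in auto)
  then show ?case
    using span_ident_d0_add[OF span_ident_d0_dmult_left[of "d0 n" n, OF _ d0.prems] d0.IH[OF d0.prems]]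
    by simp
qed (simp add: span_ident_d0.zero)

lemma Omega_subset_span_ident_d0: "(Omega :: (mor \<Rightarrow> 'k::field) set) \<subseteq> span_ident_d0"
proof
  fix x :: "mor \<Rightarrow> 'k" assume "x \<in> Omega"
  then show "x \<in> span_ident_d0"
  proof (induction rule: Omega.induct)
    case (gen_id n)
    show ?case using span_ident_d0.ident[OF span_ident_d0.zero, of 1 n] by simp
  next
    case (gen_d n)
    show ?case using span_ident_d0.d0[OF span_ident_d0.zero, of 1 n] by simp
  qed (auto intro: span_ident_d0.zero span_ident_d0_smult span_ident_d0_dmult
      span_ident_d0_add[where a = 1, simplified])
qed

lemma Omega_omega_shaped: "w \<in> Omega \<Longrightarrow> omega_shaped w"
  using Omega_subset_span_ident_d0 span_ident_d0_omega_shaped by blast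

lemma Omega_subset_delta_alg: "(Omega :: (mor \<Rightarrow> 'k::field) set) \<subseteq> delta_alg"
proof
  fix w :: "mor \<Rightarrow> 'k" assume "w \<in> Omega"
  then have shaped: "omega_shaped w" by (rule Omega_omega_shaped)
  have "valid_mor \<psi>" if "w \<psi> \<noteq> 0" for \<psi>
  proof -
    have "(\<exists>n. \<psi> = id_mor n) \<or> (\<exists>n i. i \<le> n \<and> \<psi> = coface_mor n i)"
      using shaped that unfolding omega_shaped_def by blast
    then show ?thesis using valid_id_mor valid_coface_mor le_SucI by blast
  qed
  then show "w \<in> delta_alg" using shaped unfolding omega_shaped_def by (blast intro: delta_algI)
qed

lemma Omega_elem_left_ident_eq:
  fixes w :: "mor \<Rightarrow> 'k::field"
  assumes "w \<in> Omega" and ident_w: "dmult (ident (Suc m)) w = w"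
  shows "w = (\<lambda>\<psi>. w (id_mor (Suc m)) * ident (Suc m) \<psi> + w (coface_mor m 0) * d0 m \<psi>)"
proof
  fix \<psi>
  have shaped: "omega_shaped w" using assms(1) by (rule Omega_omega_shaped)
  have supp_w: "\<psi> = id_mor (Suc m) \<or> \<psi> \<in> coface_mor m ` {..m}" if "w \<psi> \<noteq> 0"
  proof -
    have "dmult (ident (Suc m)) w \<psi> \<noteq> 0" using that ident_w by simp
    then obtain \<phi> \<chi> where "ident (Suc m) \<phi> \<noteq> (0::'k)" "mcomp \<phi> \<chi> = \<psi>"
      by (rule dmult_nonzeroE)
    then have "tgt \<psi> = Suc m" by (metis ident_apply tgt_id_mor tgt_mcomp)
    moreover have "(\<exists>n. \<psi> = id_mor n) \<or> (\<exists>n i. i \<le> n \<and> \<psi> = coface_mor n i)"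
      using shaped that unfolding omega_shaped_def by blast
    ultimately show ?thesis by auto
  qed
  show "w \<psi> = w (id_mor (Suc m)) * ident (Suc m) \<psi> + w (coface_mor m 0) * d0 m \<psi>"
  proof (cases "\<psi> \<in> coface_mor m ` {..m}")
    case True
    then obtain i where "i \<le> m" "\<psi> = coface_mor m i" by auto
    moreover have "w (coface_mor m i) = (-1)^i * w (coface_mor m 0)"
      using shaped \<open>i \<le> m\<close> unfolding omega_shaped_def by blast
    ultimately show ?thesis by (simp add: d0_coface_mor)
  next
    case not_coface: False
    show ?thesis
    proof (cases "\<psi> = id_mor (Suc m)")
      case False
      then have "w \<psi> = 0" using supp_w not_coface by blast
      then show ?thesis using False not_coface by (simp add: ident_apply d0_eq_0)
    qed (simp add: ident_apply)
  qed
qed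

section \<open>Leading zeros\<close>

text \<open>The number of leading zeros of a morphism [m] \<rightarrow> [n], where the last position m is never
  counted: a constant zero map has m leading zeros, not m + 1.\<close>
definition leading_zeros :: "mor \<Rightarrow> nat" where
  "leading_zeros \<phi> = (LEAST k. src \<phi> \<le> k \<or> 0 < fn \<phi> k)"

lemma leading_zeros_le: "leading_zeros \<phi> \<le> src \<phi>"
  unfolding leading_zeros_def by (rule Least_le) simp

lemma fn_less_leading_zeros: "k < leading_zeros \<phi> \<Longrightarrow> fn \<phi> k = 0"
  unfolding leading_zeros_def using not_less_Least by blast

lemma fn_leading_zeros_pos: "leading_zeros \<phi> < src \<phi> \<Longrightarrow> 0 < fn \<phi> (leading_zeros \<phi>)"
  using LeastI[of "\<lambda>k. src \<phi> \<le> k \<or> 0 < fn \<phi> k" "src \<phi>"] unfolding leading_zeros_def by auto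

lemma leading_zeros_eqI:
  assumes "k \<le> src \<phi>" "\<forall>i<k. fn \<phi> i = 0" "k = src \<phi> \<or> 0 < fn \<phi> k"
  shows "leading_zeros \<phi> = k"
  unfolding leading_zeros_def
proof (rule Least_equality)
  show "src \<phi> \<le> k \<or> 0 < fn \<phi> k" using assms by auto
  show "k \<le> y" if "src \<phi> \<le> y \<or> 0 < fn \<phi> y" for y
    using assms that by (metis le_trans less_irrefl not_le_imp_less)
qed

lemma mcomp_coface_mor_less_leading_zeros:
  assumes "src \<phi> = Suc m" "i < leading_zeros \<phi>"
  shows "mcomp \<phi> (coface_mor m i) = mcomp \<phi> (coface_mor m 0)"
proof (rule mor_eqI)
  fix k
  show "fn (mcomp \<phi> (coface_mor m i)) k = fn (mcomp \<phi> (coface_mor m 0)) k"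
  proof (cases "k < i")
    case True
    then have "fn \<phi> k = 0" "fn \<phi> (Suc k) = 0" using assms fn_less_leading_zeros by auto
    then show ?thesis using True by (simp add: fn_mcomp fn_coface_mor)
  qed (simp add: fn_mcomp fn_coface_mor)
qed simp_all

lemma leading_zeros_mcomp_coface_mor:
  assumes v: "valid_mor \<phi>" and s: "src \<phi> = Suc m"
    and i: "leading_zeros \<phi> \<le> i" "i \<le> m"
  shows "leading_zeros (mcomp \<phi> (coface_mor m i)) = leading_zeros \<phi>"
proof (rule leading_zeros_eqI)
  show "leading_zeros \<phi> \<le> src (mcomp \<phi> (coface_mor m i))" using i by simp
  show "\<forall>j<leading_zeros \<phi>. fn (mcomp \<phi> (coface_mor m i)) j = 0"
    using i fn_less_leading_zeros by (auto simp: fn_mcomp fn_coface_mor)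
  show "leading_zeros \<phi> = src (mcomp \<phi> (coface_mor m i)) \<or>
      0 < fn (mcomp \<phi> (coface_mor m i)) (leading_zeros \<phi>)"
  proof (cases "leading_zeros \<phi> = m")
    case False
    then have lt: "leading_zeros \<phi> < m" using i by simp
    have "0 < fn \<phi> (leading_zeros \<phi>)" using fn_leading_zeros_pos lt s by simp
    moreover have "fn \<phi> (leading_zeros \<phi>) \<le> fn \<phi> (Suc (leading_zeros \<phi>))"
      using v lt s unfolding valid_mor_def by simp
    ultimately show ?thesis using lt i by (auto simp: fn_mcomp fn_coface_mor)
  qed simp
qed

definition tail_mor :: "mor \<Rightarrow> mor" where
  "tail_mor \<phi> = mcomp \<phi> (coface_mor (src \<phi> - 1) 0)"

definition cons0_mor :: "mor \<Rightarrow> mor" where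
  "cons0_mor e = (Suc (src e), tgt e,
     \<lambda>k. if k = 0 then 0 else if k \<le> Suc (src e) then fn e (k - 1) else 0)"

lemma src_cons0_mor [simp]: "src (cons0_mor e) = Suc (src e)" by (simp add: cons0_mor_def)
lemma tgt_cons0_mor [simp]: "tgt (cons0_mor e) = tgt e" by (simp add: cons0_mor_def)
lemma fn_cons0_mor:
  "fn (cons0_mor e) = (\<lambda>k. if k = 0 then 0 else if k \<le> Suc (src e) then fn e (k - 1) else 0)"
  by (simp add: cons0_mor_def)

lemma leading_zeros_tail_mor:
  assumes s: "src \<phi> = Suc m" and z: "0 < leading_zeros \<phi>"
  shows "leading_zeros (tail_mor \<phi>) = leading_zeros \<phi> - 1"
  unfolding tail_mor_def s diff_Suc_1
proof (rule leading_zeros_eqI)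
  have zl: "leading_zeros \<phi> \<le> Suc m" using leading_zeros_le s by metis
  then show "leading_zeros \<phi> - 1 \<le> src (mcomp \<phi> (coface_mor m 0))" by simp
  show "\<forall>j<leading_zeros \<phi> - 1. fn (mcomp \<phi> (coface_mor m 0)) j = 0"
    using zl fn_less_leading_zeros by (auto simp: fn_mcomp fn_coface_mor)
  show "leading_zeros \<phi> - 1 = src (mcomp \<phi> (coface_mor m 0)) \<or>
      0 < fn (mcomp \<phi> (coface_mor m 0)) (leading_zeros \<phi> - 1)"
  proof (cases "leading_zeros \<phi> - 1 = m")
    case False
    then have "leading_zeros \<phi> < src \<phi>" using zl s by simp
    then have "0 < fn \<phi> (leading_zeros \<phi>)" by (rule fn_leading_zeros_pos)
    then show ?thesis using False zl z by (auto simp: fn_mcomp fn_coface_mor)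
  qed simp
qed

lemma valid_cons0_mor: "valid_mor e \<Longrightarrow> valid_mor (cons0_mor e)"
  unfolding valid_mor_def fn_cons0_mor by (auto simp: le_diff_conv2)

lemma leading_zeros_cons0_mor: "leading_zeros (cons0_mor e) = Suc (leading_zeros e)"
proof (rule leading_zeros_eqI)
  show "Suc (leading_zeros e) \<le> src (cons0_mor e)" using leading_zeros_le by simp
  show "\<forall>i<Suc (leading_zeros e). fn (cons0_mor e) i = 0"
    using fn_less_leading_zeros leading_zeros_le by (auto simp: fn_cons0_mor)
  show "Suc (leading_zeros e) = src (cons0_mor e) \<or> 0 < fn (cons0_mor e) (Suc (leading_zeros e))"
    using fn_leading_zeros_pos leading_zeros_le[of e] by (cases "leading_zeros e = src e")
      (auto simp: fn_cons0_mor)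
qed

lemma tail_cons0_mor: "valid_mor e \<Longrightarrow> tail_mor (cons0_mor e) = e"
  unfolding tail_mor_def
  by (rule mor_eqI) (auto simp: fn_mcomp fn_coface_mor fn_cons0_mor valid_mor_def)

lemma cons0_tail_mor:
  assumes v: "valid_mor \<phi>" and s: "src \<phi> = Suc m" and z: "0 < leading_zeros \<phi>"
  shows "cons0_mor (tail_mor \<phi>) = \<phi>"
proof (rule mor_eqI)
  fix k
  have "fn \<phi> 0 = 0" using fn_less_leading_zeros z by blast
  moreover have "Suc m < k \<Longrightarrow> fn \<phi> k = 0" using v s unfolding valid_mor_def by simp
  ultimately show "fn (cons0_mor (tail_mor \<phi>)) k = fn \<phi> k"
    using s unfolding tail_mor_def by (cases k) (auto simp: fn_cons0_mor fn_mcomp fn_coface_mor)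
qed (simp_all add: tail_mor_def s)

definition odd_mors :: "mor set" where
  "odd_mors = {\<phi>. valid_mor \<phi> \<and> odd (leading_zeros \<phi>)}"

definition even_mors :: "mor set" where
  "even_mors = {\<phi>. valid_mor \<phi> \<and> even (leading_zeros \<phi>)}"

lemma valid_mor_odd_mors: "\<phi> \<in> odd_mors \<Longrightarrow> valid_mor \<phi>"
  by (simp add: odd_mors_def)

lemma odd_mors_src: "\<phi> \<in> odd_mors \<Longrightarrow> src \<phi> = Suc (src \<phi> - 1)"
  using leading_zeros_le[of \<phi>] unfolding odd_mors_def by (cases "src \<phi>") auto

lemma odd_mors_disjoint_even_mors: "\<phi> \<in> odd_mors \<Longrightarrow> \<phi> \<notin> even_mors"
  unfolding odd_mors_def even_mors_def by auto

lemma tail_mor_odd_mors: assumes "\<phi> \<in> odd_mors" shows "tail_mor \<phi> \<in> even_mors"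
proof -
  have s: "src \<phi> = Suc (src \<phi> - 1)" and v: "valid_mor \<phi>" and z: "odd (leading_zeros \<phi>)"
    using assms odd_mors_src odd_mors_def by auto
  have "valid_mor (tail_mor \<phi>)"
    unfolding tail_mor_def by (rule valid_mor_mcomp[OF v valid_coface_mor]) (use s in auto)
  moreover have "leading_zeros (tail_mor \<phi>) = leading_zeros \<phi> - 1"
    using leading_zeros_tail_mor[OF s] z by (simp add: odd_pos)
  ultimately show ?thesis using z odd_pos[OF z] unfolding even_mors_def by auto
qed

lemma cons0_mor_even_mors: "e \<in> even_mors \<Longrightarrow> cons0_mor e \<in> odd_mors"
  unfolding even_mors_def odd_mors_def by (auto simp: valid_cons0_mor leading_zeros_cons0_mor)

lemma cons0_tail_mor_odd_mors:
  assumes "\<phi> \<in> odd_mors" shows "cons0_mor (tail_mor \<phi>) = \<phi>"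
proof (rule cons0_tail_mor)
  show "valid_mor \<phi>" "0 < leading_zeros \<phi>" using assms odd_pos unfolding odd_mors_def by auto
qed (rule odd_mors_src[OF assms])

lemma tail_cons0_mor_even_mors: "e \<in> even_mors \<Longrightarrow> tail_mor (cons0_mor e) = e"
  using tail_cons0_mor unfolding even_mors_def by blast

lemma inj_on_tail_mor: "inj_on tail_mor odd_mors"
  by (rule inj_onI) (metis cons0_tail_mor_odd_mors)

section \<open>Decomposition of the categorical algebra\<close>

definition bas_d0 :: "mor \<Rightarrow> (mor \<Rightarrow> 'k::field)" where
  "bas_d0 \<phi> = dmult (bas \<phi>) (d0 (src \<phi> - 1))"

lemma bas_d0_apply:
  "src \<phi> = Suc m \<Longrightarrow>
    bas_d0 \<phi> \<psi> = (\<Sum>i\<le>m. if mcomp \<phi> (coface_mor m i) = \<psi> then (-1)^i else (0::'k::field))"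
  unfolding bas_d0_def by (simp add: dmult_bas_d0)

lemma bas_d0_in_delta_alg: "valid_mor \<phi> \<Longrightarrow> (bas_d0 \<phi> :: mor \<Rightarrow> 'k::field) \<in> delta_alg"
  unfolding bas_d0_def
  using dmult_in_delta_alg bas_in_delta_alg Omega_subset_delta_alg Omega.gen_d by blast

lemma sum_neg_one_power: "(\<Sum>i<z. (-1::'k::field)^i) = (if odd z then 1 else 0)"
  by (induction z) auto

lemma bas_d0_even_mors:
  assumes odd: "\<phi> \<in> odd_mors" and even: "e \<in> even_mors"
  shows "bas_d0 \<phi> e = (if e = tail_mor \<phi> then 1 else (0::'k::field))"
proof -
  define m where "m = src \<phi> - 1"
  define z where "z = leading_zeros \<phi>"
  have s: "src \<phi> = Suc m" using odd_mors_src[OF odd] m_def by simp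
  have v: "valid_mor \<phi>" and odd_z: "odd z" using odd unfolding odd_mors_def z_def by auto
  have "z \<le> Suc m" using leading_zeros_le s z_def by metis
  then have "{..<z} \<subseteq> {..m}" by auto
  have low: "mcomp \<phi> (coface_mor m i) = tail_mor \<phi>" if "i < z" for i
    using mcomp_coface_mor_less_leading_zeros[OF s that[unfolded z_def]]
    unfolding tail_mor_def m_def[symmetric] .
  have high: "mcomp \<phi> (coface_mor m i) \<noteq> e" if "i \<in> {..m} - {..<z}" for i
  proof -
    have "leading_zeros (mcomp \<phi> (coface_mor m i)) = z"
      using leading_zeros_mcomp_coface_mor[OF v s] that unfolding z_def by simp
    then show ?thesis using even odd_z unfolding even_mors_def by auto
  qed
  have "bas_d0 \<phi> e = (\<Sum>i\<le>m. if mcomp \<phi> (coface_mor m i) = e then (-1)^i else (0::'k))"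
    by (rule bas_d0_apply[OF s])
  also have "\<dots> = (\<Sum>i<z. if mcomp \<phi> (coface_mor m i) = e then (-1)^i else 0)"
    using high \<open>{..<z} \<subseteq> {..m}\<close> by (intro sum.mono_neutral_right) auto
  also have "\<dots> = (\<Sum>i<z. if tail_mor \<phi> = e then (-1)^i else 0)"
    using low by (intro sum.cong) auto
  also have "\<dots> = (if e = tail_mor \<phi> then 1 else 0)"
    using sum_neg_one_power[of z] odd_z by auto
  finally show ?thesis .
qed

lemma dmult_bas_ident_d0:
  assumes "valid_mor \<phi>"
  shows "dmult (bas \<phi>) (\<lambda>\<psi>. a * ident (src \<phi>) \<psi> + c * d0 (src \<phi> - 1) \<psi>) =
    (\<lambda>\<psi>. a * bas \<phi> \<psi> + c * (bas_d0 \<phi> \<psi> :: 'k::field))"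
  using assms
  by (simp add: dmult_linear_right finite_supp_ident finite_supp_d0 dmult_bas_ident bas_d0_def)

definition tail_support :: "(mor \<Rightarrow> 'k::field) \<Rightarrow> mor set" where
  "tail_support x = {\<phi> \<in> odd_mors. x (tail_mor \<phi>) \<noteq> 0}"

text \<open>Subtracting the terms x (tail_mor \<phi>) \<cdot> \<phi> d_0 clears x on all even morphisms
  (lemma bas_d0_even_mors), so the odd coefficients are what is left.\<close>
definition odd_coeff :: "(mor \<Rightarrow> 'k::field) \<Rightarrow> mor \<Rightarrow> 'k" where
  "odd_coeff x \<psi> = x \<psi> - (\<Sum>\<phi>\<in>tail_support x. x (tail_mor \<phi>) * bas_d0 \<phi> \<psi>)"

definition coeff_support :: "(mor \<Rightarrow> 'k::field) \<Rightarrow> mor set" where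
  "coeff_support x = supp (odd_coeff x) \<union> tail_support x"

lemma finite_tail_support:
  assumes "x \<in> delta_alg" shows "finite (tail_support x)"
proof -
  have "tail_support x \<subseteq> cons0_mor ` supp x"
    using cons0_tail_mor_odd_mors by (force simp: tail_support_def supp_def)
  then show ?thesis using finite_supp_delta_alg[OF assms] finite_subset by blast
qed

lemma odd_coeff_in_delta_alg:
  assumes "x \<in> delta_alg" shows "odd_coeff x \<in> delta_alg"
proof -
  have "(\<lambda>\<psi>. \<Sum>\<phi>\<in>tail_support x. x (tail_mor \<phi>) * bas_d0 \<phi> \<psi>) \<in> delta_alg"
    using finite_tail_support[OF assms] bas_d0_in_delta_alg
    by (intro delta_alg_sum) (auto simp: tail_support_def odd_mors_def)
  from delta_alg_lincomb[OF assms this, of 1 "-1"] show ?thesis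
    by (simp add: odd_coeff_def[abs_def])
qed

lemma odd_coeff_even_mors:
  fixes x :: "mor \<Rightarrow> 'k::field"
  assumes x: "x \<in> delta_alg" and e: "e \<in> even_mors"
  shows "odd_coeff x e = 0"
proof -
  have "(\<Sum>\<phi>\<in>tail_support x. x (tail_mor \<phi>) * bas_d0 \<phi> e) =
      (\<Sum>\<phi>\<in>tail_support x. if \<phi> = cons0_mor e then x e else 0)"
  proof (rule sum.cong[OF refl])
    fix \<phi> assume "\<phi> \<in> tail_support x"
    then have odd: "\<phi> \<in> odd_mors" by (simp add: tail_support_def)
    then have "e = tail_mor \<phi> \<longleftrightarrow> \<phi> = cons0_mor e"
      using cons0_tail_mor_odd_mors tail_cons0_mor_even_mors[OF e] by metis
    then show "x (tail_mor \<phi>) * bas_d0 \<phi> e = (if \<phi> = cons0_mor e then x e else 0)"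
      using bas_d0_even_mors[OF odd e] tail_cons0_mor_even_mors[OF e] by auto
  qed
  also have "\<dots> = x e"
    using finite_tail_support[OF x] cons0_mor_even_mors[OF e] tail_cons0_mor_even_mors[OF e]
    by (simp add: tail_support_def)
  finally show ?thesis by (simp add: odd_coeff_def)
qed

lemma coeff_support_odd_mors:
  assumes "x \<in> delta_alg" shows "coeff_support x \<subseteq> odd_mors"
proof -
  have "\<psi> \<in> odd_mors" if "odd_coeff x \<psi> \<noteq> 0" for \<psi>
  proof -
    have "valid_mor \<psi>" using odd_coeff_in_delta_alg[OF assms] that by (rule valid_mor_delta_alg)
    moreover have "\<psi> \<notin> even_mors" using odd_coeff_even_mors[OF assms] that by blast
    ultimately show ?thesis by (simp add: odd_mors_def even_mors_def)
  qed
  then show ?thesis by (auto simp: coeff_support_def tail_support_def supp_def)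
qed

lemma finite_coeff_support: assumes "x \<in> delta_alg" shows "finite (coeff_support x)"
  using finite_supp_delta_alg[OF odd_coeff_in_delta_alg[OF assms]] finite_tail_support[OF assms]
  by (simp add: coeff_support_def)

lemma delta_alg_decomposition:
  fixes x :: "mor \<Rightarrow> 'k::field"
  assumes x: "x \<in> delta_alg"
  shows "x \<psi> = (\<Sum>\<phi>\<in>coeff_support x. odd_coeff x \<phi> * bas \<phi> \<psi> + x (tail_mor \<phi>) * bas_d0 \<phi> \<psi>)"
proof -
  have fin: "finite (coeff_support x)" by (rule finite_coeff_support[OF x])
  have "(\<Sum>\<phi>\<in>coeff_support x. odd_coeff x \<phi> * bas \<phi> \<psi>) =
      (\<Sum>\<phi>\<in>coeff_support x. if \<phi> = \<psi> then odd_coeff x \<psi> else 0)"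
    by (intro sum.cong refl) (auto simp: bas_apply)
  also have "\<dots> = odd_coeff x \<psi>" using fin by (auto simp: coeff_support_def supp_def)
  finally have odd_part: "(\<Sum>\<phi>\<in>coeff_support x. odd_coeff x \<phi> * bas \<phi> \<psi>) = odd_coeff x \<psi>" .
  have tail_part: "(\<Sum>\<phi>\<in>coeff_support x. x (tail_mor \<phi>) * bas_d0 \<phi> \<psi>) =
      (\<Sum>\<phi>\<in>tail_support x. x (tail_mor \<phi>) * bas_d0 \<phi> \<psi>)"
    using fin coeff_support_odd_mors[OF x]
    by (intro sum.mono_neutral_right) (auto simp: coeff_support_def tail_support_def)
  show ?thesis unfolding sum.distrib odd_part tail_part by (simp add: odd_coeff_def)
qed

lemma decomposition_d0_coeff_unique:
  fixes a c :: "mor \<Rightarrow> 'k::field"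
  assumes fin: "finite S" and S: "S \<subseteq> odd_mors" and zero: "\<And>\<phi>. \<phi> \<notin> S \<Longrightarrow> c \<phi> = 0"
    and x: "\<And>\<psi>. x \<psi> = (\<Sum>\<phi>\<in>S. a \<phi> * bas \<phi> \<psi> + c \<phi> * bas_d0 \<phi> \<psi>)"
    and odd: "\<phi>\<^sub>0 \<in> odd_mors"
  shows "c \<phi>\<^sub>0 = x (tail_mor \<phi>\<^sub>0)"
proof -
  have even: "tail_mor \<phi>\<^sub>0 \<in> even_mors" by (rule tail_mor_odd_mors[OF odd])
  have "x (tail_mor \<phi>\<^sub>0) = (\<Sum>\<phi>\<in>S. if \<phi> = \<phi>\<^sub>0 then c \<phi> else 0)"
    unfolding x
  proof (rule sum.cong[OF refl])
    fix \<phi> assume "\<phi> \<in> S"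
    then have odd_\<phi>: "\<phi> \<in> odd_mors" using S by blast
    then have "\<phi> \<noteq> tail_mor \<phi>\<^sub>0" using even odd_mors_disjoint_even_mors by blast
    then have "bas \<phi> (tail_mor \<phi>\<^sub>0) = (0::'k)" by (simp add: bas_apply)
    moreover have "tail_mor \<phi>\<^sub>0 = tail_mor \<phi> \<longleftrightarrow> \<phi> = \<phi>\<^sub>0"
      using inj_onD[OF inj_on_tail_mor] odd odd_\<phi> by metis
    ultimately show "a \<phi> * bas \<phi> (tail_mor \<phi>\<^sub>0) + c \<phi> * bas_d0 \<phi> (tail_mor \<phi>\<^sub>0) =
        (if \<phi> = \<phi>\<^sub>0 then c \<phi> else 0)"
      using bas_d0_even_mors[OF odd_\<phi> even] by auto
  qed
  also have "\<dots> = c \<phi>\<^sub>0" using fin zero by (simp add: sum.delta)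
  finally show ?thesis by simp
qed

lemma decomposition_bas_coeff_unique:
  fixes a c :: "mor \<Rightarrow> 'k::field"
  assumes fin: "finite S" and S: "S \<subseteq> odd_mors"
    and zero: "\<And>\<phi>. \<phi> \<notin> S \<Longrightarrow> a \<phi> = 0 \<and> c \<phi> = 0"
    and x: "\<And>\<psi>. x \<psi> = (\<Sum>\<phi>\<in>S. a \<phi> * bas \<phi> \<psi> + c \<phi> * bas_d0 \<phi> \<psi>)"
  shows "a \<phi>\<^sub>0 = odd_coeff x \<phi>\<^sub>0"
proof -
  have zero_c: "\<And>\<phi>. \<phi> \<notin> S \<Longrightarrow> c \<phi> = 0" using zero by blast
  note c = decomposition_d0_coeff_unique[OF fin S zero_c x]
  have "tail_support x \<subseteq> S"
  proof
    fix \<phi> assume "\<phi> \<in> tail_support x"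
    then have "\<phi> \<in> odd_mors" "x (tail_mor \<phi>) \<noteq> 0" by (auto simp: tail_support_def)
    then show "\<phi> \<in> S" using c zero_c by metis
  qed
  have "(\<Sum>\<phi>\<in>S. a \<phi> * bas \<phi> \<phi>\<^sub>0) = (\<Sum>\<phi>\<in>S. if \<phi> = \<phi>\<^sub>0 then a \<phi> else 0)"
    by (intro sum.cong refl) (auto simp: bas_apply)
  also have "\<dots> = a \<phi>\<^sub>0" using fin zero by (simp add: sum.delta)
  finally have bas_part: "(\<Sum>\<phi>\<in>S. a \<phi> * bas \<phi> \<phi>\<^sub>0) = a \<phi>\<^sub>0" .
  have "(\<Sum>\<phi>\<in>S. c \<phi> * bas_d0 \<phi> \<phi>\<^sub>0) = (\<Sum>\<phi>\<in>S. x (tail_mor \<phi>) * bas_d0 \<phi> \<phi>\<^sub>0)"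
    using c S by (intro sum.cong) auto
  also have "\<dots> = (\<Sum>\<phi>\<in>tail_support x. x (tail_mor \<phi>) * bas_d0 \<phi> \<phi>\<^sub>0)"
    using fin S \<open>tail_support x \<subseteq> S\<close>
    by (intro sum.mono_neutral_right) (auto simp: tail_support_def)
  finally have "x \<phi>\<^sub>0 = a \<phi>\<^sub>0 + (\<Sum>\<phi>\<in>tail_support x. x (tail_mor \<phi>) * bas_d0 \<phi> \<phi>\<^sub>0)"
    using x[of \<phi>\<^sub>0] bas_part by (simp add: sum.distrib)
  then show ?thesis by (simp add: odd_coeff_def)
qed

section \<open>Coordinates over Omega\<close>

definition free_coords ::
  "(mor \<Rightarrow> 'k::field) set \<Rightarrow> ((mor \<Rightarrow> 'k) \<Rightarrow> nat) \<Rightarrow> (mor \<Rightarrow> 'k) \<Rightarrow> ((mor \<Rightarrow> 'k) \<Rightarrow> (mor \<Rightarrow> 'k)) \<Rightarrow> bool"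
  where
  "free_coords B lab x w \<longleftrightarrow>
    (\<forall>b. b \<notin> B \<longrightarrow> w b = (\<lambda>_. 0)) \<and>
    finite {b\<in>B. w b \<noteq> (\<lambda>_. 0)} \<and>
    (\<forall>b\<in>B. w b \<in> Omega \<and> dmult (ident (lab b)) (w b) = w b) \<and>
    x = (\<lambda>\<psi>. \<Sum>b\<in>{b\<in>B. w b \<noteq> (\<lambda>_. 0)}. dmult b (w b) \<psi>)"

lemma free_right_Omega_module_iff:
  "free_right_Omega_module M \<longleftrightarrow>
    (\<forall>x\<in>M. \<forall>w\<in>Omega. dmult x w \<in> M) \<and>
    (\<exists>B lab. B \<subseteq> M \<and> (\<forall>b\<in>B. dmult b (ident (lab b)) = b) \<and>
      (\<forall>x\<in>M. \<exists>!w. free_coords B lab x w))"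
  unfolding free_right_Omega_module_def free_coords_def ..

definition basis_mor :: "(mor \<Rightarrow> 'k::field) \<Rightarrow> mor" where
  "basis_mor b = (SOME \<phi>. b \<phi> \<noteq> 0)"

lemma basis_mor_bas [simp]: "basis_mor (bas \<phi> :: mor \<Rightarrow> 'k::field) = \<phi>"
  unfolding basis_mor_def bas_def by simp

lemma Collect_bas_image: "{b \<in> bas ` M. P b} = bas ` {\<phi> \<in> M. P (bas \<phi>)}"
  by auto

lemma inj_on_bas: "inj_on (bas :: mor \<Rightarrow> mor \<Rightarrow> 'k::field) A"
  by (metis basis_mor_bas inj_onI)

definition omega_coords :: "(mor \<Rightarrow> 'k::field) \<Rightarrow> (mor \<Rightarrow> 'k) \<Rightarrow> (mor \<Rightarrow> 'k)" where
  "omega_coords x b = (if b \<in> bas ` odd_mors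
     then (\<lambda>\<psi>. odd_coeff x (basis_mor b) * ident (src (basis_mor b)) \<psi>
               + x (tail_mor (basis_mor b)) * d0 (src (basis_mor b) - 1) \<psi>)
     else (\<lambda>_. 0))"

lemma omega_coords_bas:
  "\<phi> \<in> odd_mors \<Longrightarrow> omega_coords x (bas \<phi>) =
    (\<lambda>\<psi>. odd_coeff x \<phi> * ident (src \<phi>) \<psi> + x (tail_mor \<phi>) * d0 (src \<phi> - 1) \<psi>)"
  unfolding omega_coords_def by simp

lemma omega_coords_in_Omega: "omega_coords x b \<in> Omega"
  unfolding omega_coords_def
  by (cases "b \<in> bas ` odd_mors")
    (simp_all only: if_True if_False Omega.zero Omega.add Omega.smult Omega.gen_id Omega.gen_d)

lemma dmult_bas_omega_coords:
  assumes "\<phi> \<in> odd_mors"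
  shows "dmult (bas \<phi>) (omega_coords x (bas \<phi>)) =
    (\<lambda>\<psi>. odd_coeff x \<phi> * bas \<phi> \<psi> + x (tail_mor \<phi>) * bas_d0 \<phi> \<psi>)"
  unfolding omega_coords_bas[OF assms] by (rule dmult_bas_ident_d0[OF valid_mor_odd_mors[OF assms]])

lemma ident_dmult_omega_coords:
  assumes "\<phi> \<in> odd_mors"
  shows "dmult (ident (src \<phi>)) (omega_coords x (bas \<phi>)) = omega_coords x (bas \<phi>)"
proof -
  obtain m where "src \<phi> = Suc m" using odd_mors_src[OF assms] by blast
  then show ?thesis unfolding omega_coords_bas[OF assms]
    by (simp add: dmult_linear_right finite_supp_ident finite_supp_d0 dmult_ident_ident dmult_ident_d0)
qed

lemma free_coords_omega_coords:
  fixes x :: "mor \<Rightarrow> 'k::field"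
  assumes x: "x \<in> delta_alg"
  shows "free_coords (bas ` odd_mors) (\<lambda>b. src (basis_mor b)) x (omega_coords x)"
proof -
  define S where "S = {\<phi> \<in> odd_mors. omega_coords x (bas \<phi>) \<noteq> (\<lambda>_. 0)}"
  have nonzero: "{b \<in> bas ` odd_mors. omega_coords x b \<noteq> (\<lambda>_. 0)} = bas ` S"
    unfolding S_def by (rule Collect_bas_image)
  have "S \<subseteq> coeff_support x"
  proof
    fix \<phi> assume "\<phi> \<in> S"
    then have "\<phi> \<in> odd_mors" "omega_coords x (bas \<phi>) \<noteq> (\<lambda>_. 0)" by (auto simp: S_def)
    then have "odd_coeff x \<phi> \<noteq> 0 \<or> x (tail_mor \<phi>) \<noteq> 0" by (auto simp: omega_coords_bas)
    with \<open>\<phi> \<in> odd_mors\<close> show "\<phi> \<in> coeff_support x"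
      by (auto simp: coeff_support_def tail_support_def supp_def)
  qed
  have fin: "finite (coeff_support x)" by (rule finite_coeff_support[OF x])
  have "x \<psi> = (\<Sum>b\<in>bas ` S. dmult b (omega_coords x b) \<psi>)" for \<psi>
  proof -
    have "x \<psi> = (\<Sum>\<phi>\<in>coeff_support x. odd_coeff x \<phi> * bas \<phi> \<psi> + x (tail_mor \<phi>) * bas_d0 \<phi> \<psi>)"
      by (rule delta_alg_decomposition[OF x])
    also have "\<dots> = (\<Sum>\<phi>\<in>coeff_support x. dmult (bas \<phi>) (omega_coords x (bas \<phi>)) \<psi>)"
      by (intro sum.cong refl)
        (simp add: dmult_bas_omega_coords[OF subsetD[OF coeff_support_odd_mors[OF x]]])
    also have "\<dots> = (\<Sum>\<phi>\<in>S. dmult (bas \<phi>) (omega_coords x (bas \<phi>)) \<psi>)"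
      using fin \<open>S \<subseteq> coeff_support x\<close> coeff_support_odd_mors[OF x]
      by (intro sum.mono_neutral_right) (auto simp: S_def)
    also have "\<dots> = (\<Sum>b\<in>bas ` S. dmult b (omega_coords x b) \<psi>)"
      by (simp add: sum.reindex[OF inj_on_bas])
    finally show ?thesis .
  qed
  moreover have "finite S" using finite_subset[OF \<open>S \<subseteq> coeff_support x\<close> fin] .
  moreover have "omega_coords x b = (\<lambda>_. 0)" if "b \<notin> bas ` odd_mors" for b
    using that by (simp add: omega_coords_def)
  moreover have "dmult (ident (src (basis_mor b))) (omega_coords x b) = omega_coords x b"
    if "b \<in> bas ` odd_mors" for b
    using that ident_dmult_omega_coords by auto
  ultimately show ?thesis
    unfolding free_coords_def nonzero using omega_coords_in_Omega by blast
qed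

lemma free_coords_unique:
  fixes x :: "mor \<Rightarrow> 'k::field" and w :: "(mor \<Rightarrow> 'k) \<Rightarrow> (mor \<Rightarrow> 'k)"
  assumes "free_coords (bas ` odd_mors) (\<lambda>b. src (basis_mor b)) x w"
  shows "w = omega_coords x"
proof
  fix b :: "mor \<Rightarrow> 'k"
  define S where "S = {\<phi> \<in> odd_mors. w (bas \<phi>) \<noteq> (\<lambda>_. 0)}"
  define a where "a \<phi> = w (bas \<phi>) (id_mor (src \<phi>))" for \<phi>
  define c where "c \<phi> = w (bas \<phi>) (coface_mor (src \<phi> - 1) 0)" for \<phi>
  have outside: "\<And>b. b \<notin> bas ` odd_mors \<Longrightarrow> w b = (\<lambda>_. 0)"
    and "finite (bas ` S :: (mor \<Rightarrow> 'k) set)"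
    and w_Omega: "\<And>\<phi>. \<phi> \<in> odd_mors \<Longrightarrow> w (bas \<phi>) \<in> Omega"
    and w_ident: "\<And>\<phi>. \<phi> \<in> odd_mors \<Longrightarrow> dmult (ident (src \<phi>)) (w (bas \<phi>)) = w (bas \<phi>)"
    and x_sum: "x = (\<lambda>\<psi>. \<Sum>b\<in>bas ` S. dmult b (w b) \<psi>)"
    using assms unfolding free_coords_def S_def Collect_bas_image by auto
  have "finite S" using \<open>finite (bas ` S)\<close> inj_on_bas finite_imageD by blast
  have S: "S \<subseteq> odd_mors" by (auto simp: S_def)
  have w_eq: "w (bas \<phi>) = (\<lambda>\<psi>. a \<phi> * ident (src \<phi>) \<psi> + c \<phi> * d0 (src \<phi> - 1) \<psi>)"
    if odd: "\<phi> \<in> odd_mors" for \<phi>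
  proof -
    obtain m where "src \<phi> = Suc m" using odd_mors_src[OF odd] by blast
    then show ?thesis
      using Omega_elem_left_ident_eq[OF w_Omega[OF odd], of m] w_ident[OF odd] unfolding a_def c_def by simp
  qed
  have dmult_w: "dmult (bas \<phi>) (w (bas \<phi>)) = (\<lambda>\<psi>. a \<phi> * bas \<phi> \<psi> + c \<phi> * bas_d0 \<phi> \<psi>)"
    if "\<phi> \<in> odd_mors" for \<phi>
    unfolding w_eq[OF that] by (rule dmult_bas_ident_d0[OF valid_mor_odd_mors[OF that]])
  have zero: "a \<phi> = 0 \<and> c \<phi> = 0" if "\<phi> \<notin> S" for \<phi>
  proof -
    have "w (bas \<phi>) = (\<lambda>_. 0)"
    proof (cases "\<phi> \<in> odd_mors")
      case False
      then have "bas \<phi> \<notin> bas ` odd_mors" by (metis basis_mor_bas imageE)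
      then show ?thesis by (rule outside)
    qed (use that in \<open>simp add: S_def\<close>)
    then show ?thesis by (simp add: a_def c_def)
  qed
  have x_decomp: "x \<psi> = (\<Sum>\<phi>\<in>S. a \<phi> * bas \<phi> \<psi> + c \<phi> * bas_d0 \<phi> \<psi>)" for \<psi>
  proof -
    have "x \<psi> = (\<Sum>\<phi>\<in>S. dmult (bas \<phi>) (w (bas \<phi>)) \<psi>)"
      using x_sum by (simp add: sum.reindex[OF inj_on_bas])
    also have "\<dots> = (\<Sum>\<phi>\<in>S. a \<phi> * bas \<phi> \<psi> + c \<phi> * bas_d0 \<phi> \<psi>)"
      by (intro sum.cong refl) (simp add: dmult_w subsetD[OF S])
    finally show ?thesis .
  qed
  show "w b = omega_coords x b"
  proof (cases "b \<in> bas ` odd_mors")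
    case True
    then obtain \<phi> where "\<phi> \<in> odd_mors" "b = bas \<phi>" by blast
    then show ?thesis
      using decomposition_d0_coeff_unique[OF \<open>finite S\<close> S _ x_decomp]
        decomposition_bas_coeff_unique[OF \<open>finite S\<close> S zero x_decomp] zero
      by (simp add: w_eq omega_coords_bas)
  qed (simp add: outside omega_coords_def)
qed

theorem mainTheorem3:
  shows "free_right_Omega_module (delta_alg :: (mor \<Rightarrow> 'k::field) set)"
proof -
  let ?B = "bas ` odd_mors :: (mor \<Rightarrow> 'k) set" and ?lab = "\<lambda>b. src (basis_mor b)"
  have closed: "\<forall>x\<in>delta_alg. \<forall>w\<in>Omega. dmult x w \<in> (delta_alg :: (mor \<Rightarrow> 'k) set)"
    using dmult_in_delta_alg Omega_subset_delta_alg by blast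
  have basis: "?B \<subseteq> delta_alg" "\<forall>b\<in>?B. dmult b (ident (?lab b)) = b"
    by (auto intro: bas_in_delta_alg valid_mor_odd_mors simp: dmult_bas_ident valid_mor_odd_mors)
  have "\<forall>x\<in>delta_alg. \<exists>!w. free_coords ?B ?lab x w"
    using free_coords_omega_coords free_coords_unique by (intro ballI ex1I) auto
  with closed basis show ?thesis
    unfolding free_right_Omega_module_iff by (intro conjI exI[of _ ?B] exI[of _ ?lab]) auto
qed

end
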